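(* Let $f_i:\mathbb{R}^d\to\mathbb{R}$ be twice differentiable, fix $w^t\in\mathbb{R}^d$, and let $g_t=\nabla f_i(w^t)$, $\mathbf{H}_t=\nabla^2 f_i(w^t)$ and $$q(w)=f_i(w^t)+\langle g_t,w-w^t\rangle+\tfrac12\langle \mathbf{H}_t(w-w^t),w-w^t\rangle .$$ Define $$w^{t+1/2}=\arg\min_{w\in\mathbb{R}^d}\tfrac12\|w-w^t\|^2\ \text{ s.t. }\ f_i(w^t)+\langle g_t,w-w^t\rangle=0,$$ $$w^{t+1}=\arg\min_{w\in\mathbb{R}^d}\tfrac12\|w-w^{t+1/2}\|^2\ \text{ s.t. }\ q(w^{t+1/2})+\langle \nabla q(w^{t+1/2}),w-w^{t+1/2}\rangle=0,$$ assuming $g_t\neq 0$ and $\nabla q(w^{t+1/2})\neq 0$. Then $$w^{t+1}=w^t-\frac{f_i(w^t)}{\|g_t\|^2}g_t-\frac12\,\frac{f_i(w^t)^2}{\|g_t\|^4}\,\frac{\langle \mathbf{H}_tg_t,g_t\rangle}{\|v^{t+1}\|^2}\,v^{t+1},\qquad\text{where } v^{t+1}=\left(\mathbf{I}-\mathbf{H}_t\frac{f_i(w^t)}{\|g_t\|^2}\right)g_t .$$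
   Context: This two-step update is called SP2$^+$. Note that $\nabla q(w^{t+1/2})=v^{t+1}$. *)

theory Defs
  imports "HOL-Analysis.Analysis"
begin

end

theory Submission
  imports Defs
begin

text \<open>Each half step projects the current point \<open>p\<close> orthogonally onto an affine hyperplane
  \<open>c + a \<bullet> (w - p) = 0\<close>, which gives \<open>p - (c / \<parallel>a\<parallel>\<^sup>2) a\<close>. The first step is
  \<open>-(f(w\<^sub>t) / \<parallel>g\<parallel>\<^sup>2) g\<close>; along it the linear part of \<open>q\<close> cancels \<open>f(w\<^sub>t)\<close>, so \<open>q\<close> at the
  half step is half the Hessian form of the step. The Hessian is symmetric: the second differences
  \<open>f(x + tu + tv) - f(x + tu) - f(x + tv) + f(x)\<close> are symmetric in \<open>u, v\<close> and, divided by
  \<open>t\<^sup>2\<close>, tend to \<open>H u \<bullet> v\<close> by the mean value theorem. Hence the gradient of \<open>q\<close> at the half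
  step is \<open>g + H (w\<^sub>t\<^sub>+\<^sub>1\<^sub>/\<^sub>2 - w\<^sub>t)\<close>, which is the vector \<open>v\<close> of the statement, and the second
  projection gives the formula.\<close>

lemma is_arg_min_hyperplane_projection:
  fixes a p m :: "'a::real_inner" and c :: real
  assumes "a \<noteq> 0"
    and "is_arg_min (\<lambda>w. (1/2) * (norm (w - p))\<^sup>2) (\<lambda>w. c + a \<bullet> (w - p) = 0) m"
  shows "m = p - (c / (norm a)\<^sup>2) *\<^sub>R a"
proof -
  define m0 where "m0 = p - (c / (norm a)\<^sup>2) *\<^sub>R a"
  have "c + a \<bullet> (m0 - p) = 0"
    using assms(1) by (simp add: m0_def inner_diff_right power2_norm_eq_inner)
  with assms(2) have m_on: "c + a \<bullet> (m - p) = 0"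
    and m_min: "(norm (m - p))\<^sup>2 \<le> (norm (m0 - p))\<^sup>2"
    by (auto simp: is_arg_min_linorder)
  have "a \<bullet> (m - m0) = 0"
    using m_on \<open>c + a \<bullet> (m0 - p) = 0\<close> by (simp add: inner_diff_right)
  moreover have "m0 - p = (- (c / (norm a)\<^sup>2)) *\<^sub>R a"
    by (simp add: m0_def)
  ultimately have "orthogonal (m - m0) (m0 - p)"
    by (simp add: orthogonal_def inner_commute)
  then have "(norm (m - p))\<^sup>2 = (norm (m - m0))\<^sup>2 + (norm (m0 - p))\<^sup>2"
    using norm_add_Pythagorean[of "m - m0" "m0 - p"] by simp
  with m_min have "m = m0" by simp
  then show ?thesis by (simp add: m0_def)
qed

lemma GDERIV_unique:
  assumes "GDERIV f x :> D" and "GDERIV f x :> E"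
  shows "D = E"
proof -
  have "(\<lambda>h. h \<bullet> D) = (\<lambda>h. h \<bullet> E)"
    using assms unfolding gderiv_def by (rule has_derivative_unique)
  then have "\<forall>h. h \<bullet> D = h \<bullet> E"
    by (simp add: fun_eq_iff)
  then show ?thesis
    by (simp only: vector_eq_ldot)
qed

lemma GDERIV_quadratic:
  fixes A :: "'a::real_inner \<Rightarrow> 'a"
  assumes "bounded_linear A" and A_sym: "\<And>u v. A u \<bullet> v = A v \<bullet> u"
  shows "GDERIV (\<lambda>w. c + g \<bullet> (w - p) + (1/2) * (A (w - p) \<bullet> (w - p))) x :> g + A (x - p)"
  unfolding gderiv_def
proof (rule has_derivative_eq_rhs)
  show "((\<lambda>w. c + g \<bullet> (w - p) + (1/2) * (A (w - p) \<bullet> (w - p))) has_derivative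
      (\<lambda>h. g \<bullet> h + (1/2) * (A h \<bullet> (x - p) + A (x - p) \<bullet> h))) (at x)"
    by (auto intro!: derivative_eq_intros bounded_linear.has_derivative[OF assms(1)])
  have "A h \<bullet> (x - p) = h \<bullet> A (x - p)" for h
    using A_sym[of h "x - p"] by (simp add: inner_commute)
  then show "(\<lambda>h. g \<bullet> h + (1/2) * (A h \<bullet> (x - p) + A (x - p) \<bullet> h)) = (\<lambda>h. h \<bullet> (g + A (x - p)))"
    by (auto simp: inner_add_right inner_commute)
qed

lemma DERIV_along_line:
  fixes f :: "'a::real_inner \<Rightarrow> real"
  assumes "GDERIV f (c + s *\<^sub>R v) :> D"
  shows "((\<lambda>s. f (c + s *\<^sub>R v)) has_real_derivative D \<bullet> v) (at s)"
proof -
  have "((\<lambda>s. c + s *\<^sub>R v) has_derivative (\<lambda>h. h *\<^sub>R v)) (at s)"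
    by (auto intro!: derivative_eq_intros)
  then have "((\<lambda>s. f (c + s *\<^sub>R v)) has_derivative (\<lambda>h. (h *\<^sub>R v) \<bullet> D)) (at s)"
    using assms unfolding gderiv_def by (rule has_derivative_compose)
  moreover have "(\<lambda>h. (h *\<^sub>R v) \<bullet> D) = (*) (D \<bullet> v)"
    by (auto simp: inner_commute)
  ultimately show ?thesis
    by (simp only: has_field_derivative_def)
qed

definition second_difference :: "('a::real_vector \<Rightarrow> real) \<Rightarrow> 'a \<Rightarrow> 'a \<Rightarrow> 'a \<Rightarrow> real \<Rightarrow> real"
  where "second_difference f x u v t = f (x + t *\<^sub>R u + t *\<^sub>R v) - f (x + t *\<^sub>R u) - f (x + t *\<^sub>R v) + f x"

lemma second_difference_commute: "second_difference f x u v t = second_difference f x v u t"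
  by (simp add: second_difference_def add_ac)

lemma second_difference_mean_value:
  fixes f :: "'a::real_inner \<Rightarrow> real"
  assumes grad: "\<And>y. GDERIV f y :> G y" and "0 < t"
  obtains z where "0 < z" "z < t"
    and "second_difference f x u v t = t * ((G (x + t *\<^sub>R u + z *\<^sub>R v) - G (x + z *\<^sub>R v)) \<bullet> v)"
proof -
  define \<phi> where "\<phi> s = f (x + t *\<^sub>R u + s *\<^sub>R v) - f (x + s *\<^sub>R v)" for s
  define \<phi>' where "\<phi>' s = (G (x + t *\<^sub>R u + s *\<^sub>R v) - G (x + s *\<^sub>R v)) \<bullet> v" for s
  have "DERIV \<phi> s :> \<phi>' s" for s
    unfolding \<phi>_def \<phi>'_def inner_diff_left
    by (intro DERIV_diff DERIV_along_line grad)
  then obtain z where "0 < z" "z < t" and "\<phi> t - \<phi> 0 = (t - 0) * \<phi>' z"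
    using MVT2[OF \<open>0 < t\<close>, of \<phi> \<phi>'] by blast
  moreover have "second_difference f x u v t = \<phi> t - \<phi> 0"
    by (simp add: \<phi>_def second_difference_def)
  ultimately show ?thesis
    by (intro that) (simp_all add: \<phi>'_def)
qed

lemma second_difference_estimate:
  fixes f :: "'a::real_inner \<Rightarrow> real"
  assumes grad: "\<And>y. GDERIV f y :> G y" and "linear D"
    and approx: "\<And>y. norm y < d \<Longrightarrow> norm (G (x + y) - G x - D y) \<le> e * norm y"
    and "0 \<le> e" and "0 < t" and t_small: "t * (norm u + norm v) < d"
  shows "\<bar>second_difference f x u v t - t\<^sup>2 * (D u \<bullet> v)\<bar> \<le> e * t\<^sup>2 * ((norm u + 2 * norm v) * norm v)"
proof -
  obtain z where z: "0 < z" "z < t"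
    and mv: "second_difference f x u v t = t * ((G (x + t *\<^sub>R u + z *\<^sub>R v) - G (x + z *\<^sub>R v)) \<bullet> v)"
    using second_difference_mean_value[OF grad \<open>0 < t\<close>] by blast
  define \<Delta> where "\<Delta> = G (x + t *\<^sub>R u + z *\<^sub>R v) - G (x + z *\<^sub>R v)"
  define y1 where "y1 = t *\<^sub>R u + z *\<^sub>R v"
  define y2 where "y2 = z *\<^sub>R v"
  have "z * norm v \<le> t * norm v"
    using z by (simp add: mult_right_mono)
  then have y1: "norm y1 \<le> t * (norm u + norm v)"
    using norm_triangle_ineq[of "t *\<^sub>R u" "z *\<^sub>R v"] z
    by (simp add: y1_def algebra_simps)
  have y2: "norm y2 \<le> t * norm v"
    using z by (simp add: y2_def mult_right_mono)
  have r1: "norm (G (x + y1) - G x - D y1) \<le> e * norm y1"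
    using y1 t_small by (intro approx) linarith
  have "t * norm v \<le> t * (norm u + norm v)"
    using \<open>0 < t\<close> by (simp add: mult_left_mono)
  then have r2: "norm (G (x + y2) - G x - D y2) \<le> e * norm y2"
    using y2 t_small by (intro approx) linarith
  have "\<Delta> - t *\<^sub>R D u = (G (x + y1) - G x - D y1) - (G (x + y2) - G x - D y2)"
    using \<open>linear D\<close> by (simp add: \<Delta>_def y1_def y2_def linear_add linear_scale algebra_simps)
  also have "norm \<dots> \<le> e * norm y1 + e * norm y2"
    by (rule order.trans[OF norm_triangle_ineq4 add_mono[OF r1 r2]])
  also have "\<dots> \<le> e * (t * (norm u + 2 * norm v))"
    using mult_left_mono[OF add_mono[OF y1 y2] \<open>0 \<le> e\<close>] by (simp add: algebra_simps)
  finally have \<Delta>_approx: "norm (\<Delta> - t *\<^sub>R D u) \<le> e * (t * (norm u + 2 * norm v))" .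
  have "second_difference f x u v t - t\<^sup>2 * (D u \<bullet> v) = t * ((\<Delta> - t *\<^sub>R D u) \<bullet> v)"
    by (simp add: mv \<Delta>_def power2_eq_square algebra_simps)
  then have "\<bar>second_difference f x u v t - t\<^sup>2 * (D u \<bullet> v)\<bar> = t * \<bar>(\<Delta> - t *\<^sub>R D u) \<bullet> v\<bar>"
    using \<open>0 < t\<close> by (simp add: abs_mult)
  also have "\<dots> \<le> t * (norm (\<Delta> - t *\<^sub>R D u) * norm v)"
    using \<open>0 < t\<close> Cauchy_Schwarz_ineq2 by (simp add: mult_left_mono)
  also have "\<dots> \<le> t * (e * (t * (norm u + 2 * norm v)) * norm v)"
    using \<Delta>_approx \<open>0 < t\<close> by (simp add: mult_left_mono mult_right_mono)
  finally show ?thesis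
    by (simp add: power2_eq_square algebra_simps)
qed

lemma second_difference_tendsto:
  fixes f :: "'a::real_inner \<Rightarrow> real"
  assumes grad: "\<And>y. GDERIV f y :> G y" and hess: "(G has_derivative D) (at x)"
  shows "((\<lambda>t. second_difference f x u v t / t\<^sup>2) \<longlongrightarrow> D u \<bullet> v) (at_right 0)"
proof (rule tendstoI)
  fix \<epsilon> :: real
  assume "0 < \<epsilon>"
  define K where "K = (norm u + 2 * norm v) * norm v + 1"
  have "0 < K" by (simp add: K_def add_nonneg_pos)
  define e where "e = \<epsilon> / (2 * K)"
  have "0 < e" using \<open>0 < \<epsilon>\<close> \<open>0 < K\<close> by (simp add: e_def)
  have "linear D"
    using hess by (simp add: has_derivative_bounded_linear bounded_linear.linear)
  obtain d where "0 < d"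
    and d: "\<forall>y. norm (y - x) < d \<longrightarrow> norm (G y - G x - D (y - x)) \<le> e * norm (y - x)"
    using hess \<open>0 < e\<close> unfolding has_derivative_at_alt by blast
  then have approx: "norm (G (x + y) - G x - D y) \<le> e * norm y" if "norm y < d" for y
    using that by (metis add_diff_cancel_left')
  define \<delta> where "\<delta> = d / (norm u + norm v + 1)"
  have "0 < \<delta>" using \<open>0 < d\<close> by (simp add: \<delta>_def add_nonneg_pos)
  show "\<forall>\<^sub>F t in at_right 0. dist (second_difference f x u v t / t\<^sup>2) (D u \<bullet> v) < \<epsilon>"
    using eventually_at_right_real[OF \<open>0 < \<delta>\<close>]
  proof (rule eventually_mono)
    fix t :: real
    assume t: "t \<in> {0<..<\<delta>}"
    then have "t * (norm u + norm v + 1) < d"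
      by (simp add: \<delta>_def less_divide_eq add_nonneg_pos)
    then have "t * (norm u + norm v) < d"
      using t by (simp add: algebra_simps)
    with t have "\<bar>second_difference f x u v t - t\<^sup>2 * (D u \<bullet> v)\<bar>
        \<le> e * t\<^sup>2 * ((norm u + 2 * norm v) * norm v)"
      using \<open>0 < e\<close> by (intro second_difference_estimate[OF grad \<open>linear D\<close> approx]) auto
    also have "\<dots> < e * t\<^sup>2 * K"
      using t \<open>0 < e\<close> by (simp add: K_def)
    also have "\<dots> < \<epsilon> * t\<^sup>2"
      using t \<open>0 < \<epsilon>\<close> \<open>0 < K\<close> by (simp add: e_def)
    finally have "\<bar>second_difference f x u v t - t\<^sup>2 * (D u \<bullet> v)\<bar> / t\<^sup>2 < \<epsilon>"
      using t by (simp add: pos_divide_less_eq)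
    moreover have "second_difference f x u v t / t\<^sup>2 - D u \<bullet> v
        = (second_difference f x u v t - t\<^sup>2 * (D u \<bullet> v)) / t\<^sup>2"
      using t by (simp add: field_simps)
    ultimately show "dist (second_difference f x u v t / t\<^sup>2) (D u \<bullet> v) < \<epsilon>"
      by (simp add: dist_real_def)
  qed
qed

lemma hessian_symmetric:
  fixes f :: "'a::real_inner \<Rightarrow> real"
  assumes grad: "\<And>y. GDERIV f y :> G y" and hess: "(G has_derivative D) (at x)"
  shows "D u \<bullet> v = D v \<bullet> u"
proof -
  have "((\<lambda>t. second_difference f x u v t / t\<^sup>2) \<longlongrightarrow> D v \<bullet> u) (at_right 0)"
    using second_difference_tendsto[OF grad hess, of v u]
    unfolding second_difference_commute[of f x v u] .
  with second_difference_tendsto[OF grad hess, of u v] show ?thesis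
    by (rule tendsto_unique[OF trivial_limit_at_right_real])
qed

theorem lemma3:
  fixes f :: "real ^ 'n \<Rightarrow> real"
    and G :: "real ^ 'n \<Rightarrow> real ^ 'n"
    and H :: "real ^ 'n ^ 'n"
    and wt wh w1 g dq :: "real ^ 'n"
    and q :: "real ^ 'n \<Rightarrow> real"
  assumes grad: "\<And>x. GDERIV f x :> G x"
    and grad_diff: "\<And>x. G differentiable (at x)"
    and g_def: "g = G wt"
    and hess: "(G has_derivative (\<lambda>h. H *v h)) (at wt)"
    and q_def: "q = (\<lambda>w. f wt + g \<bullet> (w - wt) + (1/2) * ((H *v (w - wt)) \<bullet> (w - wt)))"
    and half: "is_arg_min (\<lambda>w. (1/2) * (norm (w - wt))\<^sup>2)
                 (\<lambda>w. f wt + g \<bullet> (w - wt) = 0) wh"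
    and dq: "GDERIV q wh :> dq"
    and full: "is_arg_min (\<lambda>w. (1/2) * (norm (w - wh))\<^sup>2)
                 (\<lambda>w. q wh + dq \<bullet> (w - wh) = 0) w1"
    and g_nz: "g \<noteq> 0"
    and dq_nz: "dq \<noteq> 0"
  shows "let v = g - (f wt / (norm g)\<^sup>2) *\<^sub>R (H *v g) in
         w1 = wt - (f wt / (norm g)\<^sup>2) *\<^sub>R g
              - ((1/2) * ((f wt)\<^sup>2 / (norm g) ^ 4) * (((H *v g) \<bullet> g) / (norm v)\<^sup>2)) *\<^sub>R v"
proof -
  define c where "c = f wt / (norm g)\<^sup>2"
  have H_sym: "(H *v u) \<bullet> v = (H *v v) \<bullet> u" for u v
    using hessian_symmetric[OF grad hess] .
  have wh: "wh = wt - c *\<^sub>R g"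
    unfolding c_def using g_nz half by (rule is_arg_min_hyperplane_projection)
  have "GDERIV q wh :> g + H *v (wh - wt)"
    unfolding q_def using matrix_vector_mul_bounded_linear H_sym by (rule GDERIV_quadratic)
  then have dq_eq: "dq = g - c *\<^sub>R (H *v g)"
    using GDERIV_unique[OF dq]
    by (simp add: wh matrix_vector_mult_scaleR linear_neg[OF matrix_vector_mul_linear])
  have "f wt = c * (g \<bullet> g)"
    using g_nz by (simp add: c_def power2_norm_eq_inner)
  then have q_wh: "q wh = (1/2) * c\<^sup>2 * ((H *v g) \<bullet> g)"
    by (simp add: q_def wh matrix_vector_mult_scaleR linear_neg[OF matrix_vector_mul_linear]
        power2_eq_square)
  have w1: "w1 = wh - (q wh / (norm dq)\<^sup>2) *\<^sub>R dq"
    using dq_nz full by (rule is_arg_min_hyperplane_projection)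
  have c_sq: "c\<^sup>2 = (f wt)\<^sup>2 / (norm g) ^ 4"
    by (simp add: c_def power_divide flip: power_mult)
  have v: "g - (f wt / (norm g)\<^sup>2) *\<^sub>R (H *v g) = dq"
    by (simp add: dq_eq c_def)
  show ?thesis
    unfolding Let_def v w1 unfolding q_wh c_sq unfolding wh c_def by simp
qed

end
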